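(* Let $a<b$, $0<\epsilon<\min\{1,b-a\}$ and $f\in C^1([a,b])$. Let $\sigma=\tanh$, $\beta=-3\ln(\epsilon)/\epsilon$, $$\rho_\epsilon(x)=\frac{\sigma(\beta(x+\epsilon^2))-\sigma(\beta(x-\epsilon^2))}{2\epsilon^2},\qquad \omega(t)=\sigma\bigl(\beta(t-\max\{a,t-\epsilon\})\bigr)-\sigma\bigl(\beta(t-\min\{b,t+\epsilon\})\bigr).$$ Then for all $t\in[a,b]$ one has $1-\epsilon\le\omega(t)\le2$ and $$\Bigl|\int_a^b f(s)\rho_\epsilon(t-s)\,ds-\omega(t)f(t)\Bigr|\le 20\|f\|_{C^1([a,b])}\,(b-a-\ln\epsilon)\,\epsilon.$$
   Context: $\|f\|_{C^1([a,b])}=\|f\|_{L^\infty([a,b])}+\|f'\|_{L^\infty([a,b])}$. *)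

theory Defs
  imports "HOL-Analysis.Analysis"
begin

definition C1_on :: "real \<Rightarrow> real \<Rightarrow> (real \<Rightarrow> real) \<Rightarrow> (real \<Rightarrow> real) \<Rightarrow> bool" where
  "C1_on a b f f' \<longleftrightarrow>
     (\<forall>x\<in>{a..b}. (f has_real_derivative f' x) (at x within {a..b})) \<and> continuous_on {a..b} f'"

definition C1_norm :: "real \<Rightarrow> real \<Rightarrow> (real \<Rightarrow> real) \<Rightarrow> (real \<Rightarrow> real) \<Rightarrow> real" where
  "C1_norm a b f f' = (SUP x\<in>{a..b}. \<bar>f x\<bar>) + (SUP x\<in>{a..b}. \<bar>f' x\<bar>)"

definition beta_eps :: "real \<Rightarrow> real" where
  "beta_eps \<epsilon> = - 3 * ln \<epsilon> / \<epsilon>"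

definition rho_eps :: "real \<Rightarrow> real \<Rightarrow> real" where
  "rho_eps \<epsilon> x = (tanh (beta_eps \<epsilon> * (x + \<epsilon>^2)) - tanh (beta_eps \<epsilon> * (x - \<epsilon>^2))) / (2 * \<epsilon>^2)"

definition omega_eps :: "real \<Rightarrow> real \<Rightarrow> real \<Rightarrow> real \<Rightarrow> real" where
  "omega_eps a b \<epsilon> t = tanh (beta_eps \<epsilon> * (t - max a (t - \<epsilon>))) - tanh (beta_eps \<epsilon> * (t - min b (t + \<epsilon>)))"

end

theory Submission
  imports Defs
begin

text \<open>
  With \<open>\<beta> = beta_eps \<epsilon>\<close> and \<open>c = \<epsilon>\<^sup>2\<close>, the kernel \<open>rho_eps \<epsilon>\<close> is the derivative of
  \<open>H u = (ln (cosh (\<beta> (u + c))) - ln (cosh (\<beta> (u - c)))) / (2 \<beta> c)\<close>, and by the mean value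
  theorem \<open>H u = tanh \<eta>\<close> for some \<open>\<eta>\<close> within \<open>\<beta> c\<close> of \<open>\<beta> u\<close>. Hence the mass
  \<open>H (t - a) + H (b - t)\<close> of the kernel on \<open>[a, b]\<close> differs from
  \<open>omega_eps a b \<epsilon> t = tanh (\<beta> min (t - a) \<epsilon>) + tanh (\<beta> min (b - t) \<epsilon>)\<close> by at most
  \<open>2 (\<beta> c + 1 - tanh (\<beta> \<epsilon>)) = O(\<epsilon> |ln \<epsilon>|)\<close>, since \<open>exp (- \<beta> \<epsilon>) = \<epsilon>\<^sup>3\<close>.
  The remaining part \<open>\<integral> (f s - f t) rho_eps \<epsilon> (t - s) ds\<close> is \<open>O(\<epsilon>)\<close>: near \<open>t\<close> the
  Lipschitz bound on \<open>f\<close> applies, and at distance \<open>\<ge> \<epsilon>\<close> the kernel itself is at most \<open>\<epsilon>\<close>.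
\<close>

lemma abs_tanh_diff_le: "\<bar>tanh x - tanh y\<bar> \<le> \<bar>x - y\<bar>" for x y :: real
proof -
  have mono: "tanh x - tanh y \<le> x - y" if less: "y < x" for x y :: real
  proof -
    have "\<And>z. y \<le> z \<Longrightarrow> z \<le> x \<Longrightarrow> DERIV tanh z :> 1 - tanh z ^ 2"
      by (auto intro!: derivative_eq_intros)
    from MVT2[OF less this] obtain z where "tanh x - tanh y = (x - y) * (1 - tanh z ^ 2)"
      by blast
    moreover have "0 \<le> (x - y) * tanh z ^ 2" using less by simp
    ultimately show ?thesis by (simp add: algebra_simps)
  qed
  show ?thesis
    using mono[of y x] mono[of x y] by (cases x y rule: linorder_cases) auto
qed

lemma one_minus_tanh_real: "1 - tanh x = 2 * exp (- 2 * x) / (1 + exp (- 2 * x))" for x :: real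
proof -
  have "1 + exp (- 2 * x) > 0" by (simp add: add_pos_pos)
  then show ?thesis by (simp add: tanh_real_altdef field_simps)
qed

lemma one_minus_tanh_le_exp: "1 - tanh x \<le> 2 * exp (- 2 * x)" for x :: real
  unfolding one_minus_tanh_real by (simp add: divide_le_eq add_pos_pos mult_le_cancel_left1)

lemma tanh_add_le:
  fixes x y :: real
  assumes "0 \<le> x" "0 \<le> y"
  shows "tanh (x + y) \<le> tanh x + tanh y"
proof -
  have nonneg: "0 \<le> tanh x" "0 \<le> tanh y" using assms by simp_all
  have "tanh (x + y) = (tanh x + tanh y) / (1 + tanh x * tanh y)"
    by (rule tanh_add) simp_all
  also have "\<dots> \<le> (tanh x + tanh y) / 1"
    using nonneg mult_nonneg_nonneg[OF nonneg] by (intro divide_left_mono) (simp_all add: add_pos_nonneg)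
  also have "\<dots> = tanh x + tanh y" by simp
  finally show ?thesis .
qed

definition tanh_bump :: "real \<Rightarrow> real \<Rightarrow> real \<Rightarrow> real" where
  "tanh_bump \<beta> c x = (tanh (\<beta> * (x + c)) - tanh (\<beta> * (x - c))) / (2 * c)"

definition tanh_bump_primitive :: "real \<Rightarrow> real \<Rightarrow> real \<Rightarrow> real" where
  "tanh_bump_primitive \<beta> c u = (ln (cosh (\<beta> * (u + c))) - ln (cosh (\<beta> * (u - c)))) / (2 * \<beta> * c)"

lemma tanh_bump_nonneg: "0 \<le> \<beta> \<Longrightarrow> 0 < c \<Longrightarrow> 0 \<le> tanh_bump \<beta> c x"
  unfolding tanh_bump_def by (simp add: mult_left_mono)

lemma tanh_bump_minus: "tanh_bump \<beta> c (- x) = tanh_bump \<beta> c x"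
proof -
  have "\<beta> * (- x + c) = - (\<beta> * (x - c))" "\<beta> * (- x - c) = - (\<beta> * (x + c))"
    by (simp_all add: algebra_simps)
  then show ?thesis unfolding tanh_bump_def by simp
qed

lemma tanh_bump_le_exp:
  assumes "0 < c" "c \<le> \<bar>x\<bar>"
  shows "tanh_bump \<beta> c x \<le> exp (- 2 * \<beta> * (\<bar>x\<bar> - c)) / c"
proof -
  have "tanh_bump \<beta> c \<bar>x\<bar> \<le> (1 - tanh (\<beta> * (\<bar>x\<bar> - c))) / (2 * c)"
    unfolding tanh_bump_def using assms tanh_real_lt_1 by (simp add: divide_right_mono less_imp_le)
  also have "\<dots> \<le> 2 * exp (- 2 * (\<beta> * (\<bar>x\<bar> - c))) / (2 * c)"
    using assms by (intro divide_right_mono one_minus_tanh_le_exp) auto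
  finally have "tanh_bump \<beta> c \<bar>x\<bar> \<le> exp (- 2 * \<beta> * (\<bar>x\<bar> - c)) / c"
    by (simp add: mult.assoc)
  moreover have "tanh_bump \<beta> c \<bar>x\<bar> = tanh_bump \<beta> c x"
    by (cases "0 \<le> x") (simp_all add: tanh_bump_minus)
  ultimately show ?thesis by simp
qed

lemma has_real_derivative_tanh_bump_primitive:
  assumes "\<beta> \<noteq> 0" "c \<noteq> 0"
  shows "(tanh_bump_primitive \<beta> c has_real_derivative tanh_bump \<beta> c u) (at u)"
  unfolding tanh_bump_primitive_def[abs_def] tanh_bump_def using assms
  by (auto intro!: derivative_eq_intros simp: tanh_def field_simps)

lemma tanh_bump_primitive_minus: "tanh_bump_primitive \<beta> c (- u) = - tanh_bump_primitive \<beta> c u"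
proof -
  have "\<beta> * (- u + c) = - (\<beta> * (u - c))" "\<beta> * (- u - c) = - (\<beta> * (u + c))"
    by (simp_all add: algebra_simps)
  then show ?thesis unfolding tanh_bump_primitive_def by (simp add: diff_divide_distrib)
qed

text \<open>The primitive is a difference quotient of \<open>ln \<circ> cosh\<close>, whose derivative is \<open>tanh\<close>.\<close>
lemma tanh_bump_primitive_eq_tanh:
  assumes "0 < \<beta>" "0 < c"
  obtains \<eta> where "\<bar>\<eta> - \<beta> * u\<bar> < \<beta> * c" "tanh_bump_primitive \<beta> c u = tanh \<eta>"
proof -
  have "\<beta> * (u - c) < \<beta> * (u + c)" using assms by simp
  moreover have "\<And>x. ((\<lambda>x. ln (cosh x)) has_real_derivative tanh x) (at x)"
    by (auto intro!: derivative_eq_intros simp: tanh_def)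
  ultimately obtain \<eta> where \<eta>: "\<beta> * (u - c) < \<eta>" "\<eta> < \<beta> * (u + c)"
    "ln (cosh (\<beta> * (u + c))) - ln (cosh (\<beta> * (u - c))) = (\<beta> * (u + c) - \<beta> * (u - c)) * tanh \<eta>"
    using MVT2 by blast
  show ?thesis
  proof
    show "\<bar>\<eta> - \<beta> * u\<bar> < \<beta> * c" using \<eta>(1,2) by (simp add: algebra_simps abs_less_iff)
    show "tanh_bump_primitive \<beta> c u = tanh \<eta>"
      using \<eta>(3) assms unfolding tanh_bump_primitive_def by (simp add: algebra_simps)
  qed
qed

lemma abs_tanh_bump_primitive_less_1: "0 < \<beta> \<Longrightarrow> 0 < c \<Longrightarrow> \<bar>tanh_bump_primitive \<beta> c u\<bar> < 1"
  by (metis tanh_bump_primitive_eq_tanh tanh_real_abs tanh_real_lt_1)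

lemma tanh_bump_primitive_approx:
  assumes "0 < \<beta>" "0 < c"
  shows "\<bar>tanh_bump_primitive \<beta> c u - tanh (\<beta> * min u r)\<bar> \<le> \<beta> * c + (1 - tanh (\<beta> * r))"
proof -
  obtain \<eta> where \<eta>: "\<bar>\<eta> - \<beta> * u\<bar> < \<beta> * c" "tanh_bump_primitive \<beta> c u = tanh \<eta>"
    using tanh_bump_primitive_eq_tanh[OF assms] .
  have tail: "0 \<le> 1 - tanh (\<beta> * r)" using tanh_real_lt_1[of "\<beta> * r"] by simp
  have "0 \<le> \<beta> * c" using assms by simp
  consider "u \<le> r" | "r < u" "\<beta> * r \<le> \<eta>" | "r < u" "\<eta> < \<beta> * r" by linarith
  then have "\<bar>tanh \<eta> - tanh (\<beta> * min u r)\<bar> \<le> \<beta> * c + (1 - tanh (\<beta> * r))"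
  proof cases
    case 1
    then show ?thesis using abs_tanh_diff_le[of \<eta> "\<beta> * u"] \<eta>(1) tail by simp
  next
    case 2
    then show ?thesis using tanh_real_lt_1[of \<eta>] \<open>0 \<le> \<beta> * c\<close> by simp
  next
    case 3
    moreover have "\<beta> * r < \<beta> * u" using 3 assms by simp
    ultimately have "\<bar>\<eta> - \<beta> * r\<bar> \<le> \<bar>\<eta> - \<beta> * u\<bar>" by simp
    then show ?thesis using 3 abs_tanh_diff_le[of \<eta> "\<beta> * r"] \<eta>(1) tail by simp
  qed
  with \<eta>(2) show ?thesis by simp
qed

lemma tanh_bump_convolution_has_integral:
  assumes "\<beta> \<noteq> 0" "c \<noteq> 0" "a \<le> b"
  shows "((\<lambda>s. tanh_bump \<beta> c (t - s)) has_integral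
           tanh_bump_primitive \<beta> c (t - a) + tanh_bump_primitive \<beta> c (b - t)) {a..b}"
proof -
  have "((\<lambda>s. tanh_bump_primitive \<beta> c (t - s)) has_real_derivative tanh_bump \<beta> c (t - s) * -1) (at s)"
    for s
    by (rule DERIV_chain2[OF has_real_derivative_tanh_bump_primitive[OF assms(1,2)]])
      (auto intro!: derivative_eq_intros)
  then have "((\<lambda>s. - tanh_bump_primitive \<beta> c (t - s)) has_real_derivative tanh_bump \<beta> c (t - s)) (at s)"
    for s
    using DERIV_minus by fastforce
  then have "((\<lambda>s. tanh_bump \<beta> c (t - s)) has_integral
      - tanh_bump_primitive \<beta> c (t - b) - - tanh_bump_primitive \<beta> c (t - a)) {a..b}"
    by (intro fundamental_theorem_of_calculus assms(3))
      (simp add: has_real_derivative_iff_has_vector_derivative has_vector_derivative_at_within)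
  moreover have "tanh_bump_primitive \<beta> c (t - b) = - tanh_bump_primitive \<beta> c (b - t)"
    using tanh_bump_primitive_minus[of \<beta> c "b - t"] by simp
  ultimately show ?thesis by (simp add: add.commute)
qed

lemma integral_weighted_deviation_le:
  fixes f g :: "real \<Rightarrow> real"
  assumes "a \<le> b" "continuous_on {a..b} f" "continuous_on {a..b} g"
    and g_nonneg: "\<And>s. s \<in> {a..b} \<Longrightarrow> 0 \<le> g s"
    and near: "\<And>s. s \<in> {a..b} \<Longrightarrow> \<bar>s - t\<bar> \<le> r \<Longrightarrow> \<bar>f s - f t\<bar> \<le> \<eta>"
    and far: "\<And>s. s \<in> {a..b} \<Longrightarrow> r < \<bar>s - t\<bar> \<Longrightarrow> \<bar>f s - f t\<bar> \<le> D \<and> g s \<le> \<delta>"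
    and "0 \<le> \<eta>" "0 \<le> D" "0 \<le> \<delta>"
  shows "\<bar>integral {a..b} (\<lambda>s. (f s - f t) * g s)\<bar> \<le> \<eta> * integral {a..b} g + D * \<delta> * (b - a)"
proof -
  have pointwise: "norm ((f s - f t) * g s) \<le> \<eta> * g s + D * \<delta>" if s: "s \<in> {a..b}" for s
  proof (cases "\<bar>s - t\<bar> \<le> r")
    case True
    then have "\<bar>f s - f t\<bar> * g s \<le> \<eta> * g s"
      using near[OF s] g_nonneg[OF s] by (intro mult_right_mono)
    moreover have "0 \<le> D * \<delta>" using \<open>0 \<le> D\<close> \<open>0 \<le> \<delta>\<close> by simp
    ultimately show ?thesis using g_nonneg[OF s] by (simp add: abs_mult)
  next
    case False
    then have "\<bar>f s - f t\<bar> * g s \<le> D * \<delta>"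
      using far[OF s] g_nonneg[OF s] \<open>0 \<le> D\<close> by (intro mult_mono) auto
    moreover have "0 \<le> \<eta> * g s" using g_nonneg[OF s] \<open>0 \<le> \<eta>\<close> by simp
    ultimately show ?thesis using g_nonneg[OF s] by (simp add: abs_mult)
  qed
  have "norm (integral {a..b} (\<lambda>s. (f s - f t) * g s)) \<le> integral {a..b} (\<lambda>s. \<eta> * g s + D * \<delta>)"
    using assms(2,3) pointwise
    by (intro integral_norm_bound_integral integrable_continuous_interval continuous_intros)
  also have "\<dots> = integral {a..b} (\<lambda>s. \<eta> * g s) + integral {a..b} (\<lambda>s. D * \<delta>)"
    using assms(3) by (intro integral_add integrable_continuous_interval continuous_intros)
  also have "\<dots> = \<eta> * integral {a..b} g + D * \<delta> * (b - a)"
    using assms(1) by simp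
  finally show ?thesis by simp
qed

lemma abs_le_SUP_abs:
  fixes g :: "real \<Rightarrow> real"
  assumes "continuous_on {a..b} g" "x \<in> {a..b}"
  shows "\<bar>g x\<bar> \<le> (SUP y\<in>{a..b}. \<bar>g y\<bar>)"
proof (rule cSUP_upper[OF assms(2)])
  have "compact ((\<lambda>y. \<bar>g y\<bar>) ` {a..b})"
    using assms(1) by (intro compact_continuous_image continuous_intros) auto
  then show "bdd_above ((\<lambda>y. \<bar>g y\<bar>) ` {a..b})"
    by (simp add: bounded_imp_bdd_above compact_imp_bounded)
qed

lemma C1_on_continuous: "C1_on a b f f' \<Longrightarrow> continuous_on {a..b} f"
  unfolding C1_on_def using DERIV_continuous_on by blast

lemma C1_on_lipschitz:
  assumes "C1_on a b f f'" "s \<in> {a..b}" "x \<in> {a..b}"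
  shows "\<bar>f s - f x\<bar> \<le> (SUP y\<in>{a..b}. \<bar>f' y\<bar>) * \<bar>s - x\<bar>"
proof -
  have "norm (f s - f x) \<le> (SUP y\<in>{a..b}. \<bar>f' y\<bar>) * norm (s - x)"
  proof (rule differentiable_bound[where f' = "\<lambda>y. (*) (f' y)" and S = "{a..b}"])
    show "(f has_derivative (*) (f' y)) (at y within {a..b})" if "y \<in> {a..b}" for y
      using assms(1) that unfolding C1_on_def by (simp add: has_field_derivative_def)
    show "onorm ((*) (f' y)) \<le> (SUP y\<in>{a..b}. \<bar>f' y\<bar>)" if y: "y \<in> {a..b}" for y
    proof (rule onorm_le)
      fix z :: real
      have "\<bar>f' y\<bar> \<le> (SUP y\<in>{a..b}. \<bar>f' y\<bar>)"
        using abs_le_SUP_abs assms(1) y unfolding C1_on_def by blast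
      then show "norm (f' y * z) \<le> (SUP y\<in>{a..b}. \<bar>f' y\<bar>) * norm z"
        by (simp add: abs_mult mult_right_mono)
    qed
  qed (use assms(2,3) in auto)
  then show ?thesis by simp
qed

lemma rho_eps_eq_tanh_bump: "rho_eps \<epsilon> = tanh_bump (beta_eps \<epsilon>) (\<epsilon>\<^sup>2)"
  by (simp add: fun_eq_iff rho_eps_def tanh_bump_def)

lemma omega_eps_eq:
  "omega_eps a b \<epsilon> t = tanh (beta_eps \<epsilon> * min (t - a) \<epsilon>) + tanh (beta_eps \<epsilon> * min (b - t) \<epsilon>)"
proof -
  have "t - max a (t - \<epsilon>) = min (t - a) \<epsilon>" "t - min b (t + \<epsilon>) = - min (b - t) \<epsilon>"
    by (simp_all add: max_def min_def)
  then show ?thesis unfolding omega_eps_def by simp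
qed

lemma omega_eps_le_2: "omega_eps a b \<epsilon> t \<le> 2"
  unfolding omega_eps_eq using tanh_real_lt_1 by (smt (verit))

context
  fixes \<epsilon> :: real
  assumes eps_pos: "0 < \<epsilon>" and eps_less_1: "\<epsilon> < 1"
begin

lemma beta_eps_pos: "0 < beta_eps \<epsilon>"
proof -
  have "ln \<epsilon> < 0" using eps_pos eps_less_1 by simp
  then show ?thesis using eps_pos unfolding beta_eps_def by (simp add: divide_neg_pos)
qed

lemma beta_eps_mult_eps: "beta_eps \<epsilon> * \<epsilon> = - 3 * ln \<epsilon>"
  using eps_pos unfolding beta_eps_def by simp

lemma exp_minus_beta_eps_mult_eps: "exp (- (beta_eps \<epsilon> * \<epsilon>)) = \<epsilon> ^ 3"
proof -
  have "exp (- (beta_eps \<epsilon> * \<epsilon>)) = exp (ln (\<epsilon> ^ 3))"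
    using eps_pos by (simp add: beta_eps_mult_eps ln_realpow)
  then show ?thesis using eps_pos by simp
qed

lemma one_minus_tanh_beta_eps_le: "1 - tanh (beta_eps \<epsilon> * \<epsilon>) \<le> \<epsilon>"
proof -
  have e6: "exp (- 2 * (beta_eps \<epsilon> * \<epsilon>)) = \<epsilon> ^ 6"
    using exp_of_nat_mult[of 2 "- (beta_eps \<epsilon> * \<epsilon>)"]
    by (simp add: exp_minus_beta_eps_mult_eps power_mult[symmetric])
  have "2 * \<epsilon> ^ 3 \<le> 1 + \<epsilon> ^ 6"
    using sum_squares_ge_zero[of "1 - \<epsilon> ^ 3" 0] by (simp add: power2_eq_square algebra_simps power_mult[symmetric])
  then have "2 * \<epsilon> ^ 3 / (1 + \<epsilon> ^ 6) \<le> 1"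
    by (simp add: divide_le_eq add_pos_nonneg)
  then have "\<epsilon> ^ 3 * (2 * \<epsilon> ^ 3 / (1 + \<epsilon> ^ 6)) \<le> \<epsilon> ^ 3"
    using eps_pos by (intro mult_left_le) simp_all
  moreover have "\<epsilon> ^ 3 * (2 * \<epsilon> ^ 3) = 2 * \<epsilon> ^ 6"
    by (simp add: algebra_simps flip: power_add)
  ultimately have "2 * \<epsilon> ^ 6 / (1 + \<epsilon> ^ 6) \<le> \<epsilon> ^ 3"
    by simp
  also have "\<dots> \<le> \<epsilon>"
    using power_decreasing[of 1 3 \<epsilon>] eps_pos eps_less_1 by simp
  finally show ?thesis unfolding one_minus_tanh_real e6 .
qed

lemma rho_eps_nonneg: "0 \<le> rho_eps \<epsilon> x"
  unfolding rho_eps_eq_tanh_bump using beta_eps_pos eps_pos by (simp add: tanh_bump_nonneg)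

lemma rho_eps_le_eps:
  assumes "\<epsilon> \<le> 1/2" "\<epsilon> \<le> \<bar>x\<bar>"
  shows "rho_eps \<epsilon> x \<le> \<epsilon>"
proof -
  have "\<epsilon>\<^sup>2 \<le> \<epsilon> / 2" using assms(1) eps_pos by (simp add: power2_eq_square)
  then have gap: "\<epsilon> \<le> 2 * (\<bar>x\<bar> - \<epsilon>\<^sup>2)" using assms(2) by simp
  have "rho_eps \<epsilon> x \<le> exp (- 2 * beta_eps \<epsilon> * (\<bar>x\<bar> - \<epsilon>\<^sup>2)) / \<epsilon>\<^sup>2"
    unfolding rho_eps_eq_tanh_bump using eps_pos gap by (intro tanh_bump_le_exp) auto
  also have "\<dots> \<le> exp (- (beta_eps \<epsilon> * \<epsilon>)) / \<epsilon>\<^sup>2"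
    using gap beta_eps_pos by (intro divide_right_mono) (simp_all add: mult_left_mono)
  also have "\<dots> = \<epsilon>"
    using eps_pos by (simp add: exp_minus_beta_eps_mult_eps power2_eq_square power3_eq_cube)
  finally show ?thesis .
qed

lemma omega_eps_ge:
  assumes "t \<in> {a..b}" "\<epsilon> \<le> b - a"
  shows "1 - \<epsilon> \<le> omega_eps a b \<epsilon> t"
proof -
  define m1 m2 where "m1 = min (t - a) \<epsilon>" and "m2 = min (b - t) \<epsilon>"
  have m: "0 \<le> m1" "0 \<le> m2" "\<epsilon> \<le> m1 + m2"
    using assms eps_pos by (auto simp: m1_def m2_def min_def)
  have "1 - \<epsilon> \<le> tanh (beta_eps \<epsilon> * \<epsilon>)"
    using one_minus_tanh_beta_eps_le by simp
  also have "\<dots> \<le> tanh (beta_eps \<epsilon> * m1 + beta_eps \<epsilon> * m2)"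
    using m(3) beta_eps_pos by (simp flip: distrib_left)
  also have "\<dots> \<le> tanh (beta_eps \<epsilon> * m1) + tanh (beta_eps \<epsilon> * m2)"
    using m(1,2) beta_eps_pos by (intro tanh_add_le) simp_all
  also have "\<dots> = omega_eps a b \<epsilon> t"
    by (simp add: omega_eps_eq m1_def m2_def)
  finally show ?thesis .
qed

lemma rho_eps_mass:
  assumes "a \<le> b"
  shows "integral {a..b} (\<lambda>s. rho_eps \<epsilon> (t - s)) \<le> 2"
    and "\<bar>integral {a..b} (\<lambda>s. rho_eps \<epsilon> (t - s)) - omega_eps a b \<epsilon> t\<bar> \<le> 2 * (1 - 3 * ln \<epsilon>) * \<epsilon>"
proof -
  let ?H = "tanh_bump_primitive (beta_eps \<epsilon>) (\<epsilon>\<^sup>2)"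
  have \<beta>: "0 < beta_eps \<epsilon>" and c: "0 < \<epsilon>\<^sup>2"
    using beta_eps_pos eps_pos by simp_all
  have mass: "integral {a..b} (\<lambda>s. rho_eps \<epsilon> (t - s)) = ?H (t - a) + ?H (b - t)"
    unfolding rho_eps_eq_tanh_bump using \<beta> c assms
    by (intro integral_unique tanh_bump_convolution_has_integral) simp_all
  show "integral {a..b} (\<lambda>s. rho_eps \<epsilon> (t - s)) \<le> 2"
    unfolding mass using abs_tanh_bump_primitive_less_1[OF \<beta> c] by (smt (verit))
  have "beta_eps \<epsilon> * \<epsilon>\<^sup>2 = - 3 * ln \<epsilon> * \<epsilon>"
    by (simp add: power2_eq_square beta_eps_mult_eps flip: mult.assoc)
  then have approx: "\<bar>?H u - tanh (beta_eps \<epsilon> * min u \<epsilon>)\<bar> \<le> - 3 * ln \<epsilon> * \<epsilon> + \<epsilon>" for u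
    using tanh_bump_primitive_approx[OF \<beta> c, of u \<epsilon>] one_minus_tanh_beta_eps_le by simp
  show "\<bar>integral {a..b} (\<lambda>s. rho_eps \<epsilon> (t - s)) - omega_eps a b \<epsilon> t\<bar> \<le> 2 * (1 - 3 * ln \<epsilon>) * \<epsilon>"
    unfolding mass omega_eps_eq using approx[of "t - a"] approx[of "b - t"] by argo
qed

lemma continuous_on_rho_eps_shift: "continuous_on S (\<lambda>s. rho_eps \<epsilon> (t - s))"
  unfolding rho_eps_def using eps_pos by (intro continuous_intros) auto

lemma rho_eps_deviation_le:
  assumes "a \<le> b" "t \<in> {a..b}" "continuous_on {a..b} f"
    and f_bound: "\<And>s. s \<in> {a..b} \<Longrightarrow> \<bar>f s\<bar> \<le> M0"
    and f_lipschitz: "\<And>s. s \<in> {a..b} \<Longrightarrow> \<bar>f s - f t\<bar> \<le> M1 * \<bar>s - t\<bar>"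
    and "0 \<le> M1"
  shows "\<bar>integral {a..b} (\<lambda>s. (f s - f t) * rho_eps \<epsilon> (t - s))\<bar> \<le> 2 * \<epsilon> * (M1 + 4 * M0 * (b - a + 1))"
proof -
  let ?g = "\<lambda>s. rho_eps \<epsilon> (t - s)"
  have M0: "0 \<le> M0" using f_bound[OF assms(2)] by linarith
  have osc: "\<bar>f s - f t\<bar> \<le> 2 * M0" if "s \<in> {a..b}" for s
    using f_bound[OF that] f_bound[OF assms(2)] by linarith
  have mass: "integral {a..b} ?g \<le> 2"
    using rho_eps_mass(1)[OF assms(1)] .
  note weighted = integral_weighted_deviation_le[OF assms(1,3) continuous_on_rho_eps_shift rho_eps_nonneg]
  show ?thesis
  proof (cases "\<epsilon> \<le> 1/2")
    case True
    have "\<bar>integral {a..b} (\<lambda>s. (f s - f t) * ?g s)\<bar> \<le> M1 * \<epsilon> * integral {a..b} ?g + 2 * M0 * \<epsilon> * (b - a)"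
    proof (rule weighted[where r = \<epsilon>])
      show "\<bar>f s - f t\<bar> \<le> M1 * \<epsilon>" if "s \<in> {a..b}" "\<bar>s - t\<bar> \<le> \<epsilon>" for s
        using f_lipschitz[OF that(1)] mult_left_mono[OF that(2) \<open>0 \<le> M1\<close>] by linarith
      show "\<bar>f s - f t\<bar> \<le> 2 * M0 \<and> ?g s \<le> \<epsilon>" if "s \<in> {a..b}" "\<epsilon> < \<bar>s - t\<bar>" for s
        using osc[OF that(1)] rho_eps_le_eps[OF True] that(2) by (simp add: abs_minus_commute)
    qed (use M0 \<open>0 \<le> M1\<close> eps_pos in simp_all)
    also have "\<dots> \<le> M1 * \<epsilon> * 2 + 2 * M0 * \<epsilon> * (b - a)"
      using mass \<open>0 \<le> M1\<close> eps_pos by (simp add: mult_left_mono)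
    also have "\<dots> \<le> 2 * \<epsilon> * (M1 + 4 * M0 * (b - a + 1))"
    proof -
      have "0 \<le> M0 * \<epsilon> * (6 * (b - a) + 8)" using M0 eps_pos assms(1) by simp
      then show ?thesis by (simp add: algebra_simps)
    qed
    finally show ?thesis .
  next
    case False
    text \<open>For \<open>\<epsilon> > 1/2\<close> the crude oscillation bound suffices: the far region is empty.\<close>
    have "\<bar>integral {a..b} (\<lambda>s. (f s - f t) * ?g s)\<bar> \<le> 2 * M0 * integral {a..b} ?g + 0 * 0 * (b - a)"
    proof (rule weighted[where r = "b - a"])
      show "\<bar>f s - f t\<bar> \<le> 2 * M0" if "s \<in> {a..b}" for s
        using osc[OF that] .
      show "\<bar>f s - f t\<bar> \<le> 0 \<and> ?g s \<le> 0" if "s \<in> {a..b}" "b - a < \<bar>s - t\<bar>" for s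
        using that assms(2) by auto
    qed (use M0 in simp_all)
    also have "\<dots> \<le> 2 * M0 * 2"
      using mult_left_mono[OF mass, of "2 * M0"] M0 by simp
    also have "\<dots> \<le> 2 * \<epsilon> * (M1 + 4 * M0 * (b - a + 1))"
    proof -
      have "2 * M0 * 2 \<le> 2 * \<epsilon> * (4 * M0)"
        using mult_left_mono[of 1 "2 * \<epsilon>" "4 * M0"] False M0 by (simp add: algebra_simps)
      also have "\<dots> \<le> 2 * \<epsilon> * (M1 + 4 * M0 * (b - a + 1))"
        using M0 eps_pos assms(1) \<open>0 \<le> M1\<close> mult_nonneg_nonneg[of M0 "b - a"]
        by (intro mult_left_mono) (simp_all add: algebra_simps)
      finally show ?thesis .
    qed
    finally show ?thesis .
  qed
qed

lemma rho_eps_convolution_error: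
  assumes "\<epsilon> \<le> b - a" "t \<in> {a..b}" "continuous_on {a..b} f"
    and f_bound: "\<And>s. s \<in> {a..b} \<Longrightarrow> \<bar>f s\<bar> \<le> M0"
    and f_lipschitz: "\<And>s. s \<in> {a..b} \<Longrightarrow> \<bar>f s - f t\<bar> \<le> M1 * \<bar>s - t\<bar>"
    and "0 \<le> M1"
  shows "\<bar>integral {a..b} (\<lambda>s. f s * rho_eps \<epsilon> (t - s)) - omega_eps a b \<epsilon> t * f t\<bar>
           \<le> 20 * (M0 + M1) * (b - a - ln \<epsilon>) * \<epsilon>"
proof -
  let ?g = "\<lambda>s. rho_eps \<epsilon> (t - s)"
  have ab: "a \<le> b" using assms(1) eps_pos by simp
  have M0: "0 \<le> M0" using f_bound[OF assms(2)] by linarith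
  have "integral {a..b} (\<lambda>s. (f s - f t) * ?g s)
      = integral {a..b} (\<lambda>s. f s * ?g s) - integral {a..b} (\<lambda>s. f t * ?g s)"
    unfolding left_diff_distrib using assms(3)
    by (intro integral_diff integrable_continuous_interval continuous_intros continuous_on_rho_eps_shift)
  then have split: "integral {a..b} (\<lambda>s. f s * ?g s) - omega_eps a b \<epsilon> t * f t
      = integral {a..b} (\<lambda>s. (f s - f t) * ?g s) + f t * (integral {a..b} ?g - omega_eps a b \<epsilon> t)"
    by (simp add: algebra_simps)
  have "\<bar>f t * (integral {a..b} ?g - omega_eps a b \<epsilon> t)\<bar> \<le> M0 * (2 * (1 - 3 * ln \<epsilon>) * \<epsilon>)"
    unfolding abs_mult using f_bound[OF assms(2)] rho_eps_mass(2)[OF ab] by (intro mult_mono) auto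
  then have "\<bar>integral {a..b} (\<lambda>s. f s * ?g s) - omega_eps a b \<epsilon> t * f t\<bar>
      \<le> 2 * \<epsilon> * (M1 + 4 * M0 * (b - a + 1)) + M0 * (2 * (1 - 3 * ln \<epsilon>) * \<epsilon>)"
    unfolding split using rho_eps_deviation_le[OF ab assms(2-6)] by linarith
  also have "\<dots> \<le> 20 * (M0 + M1) * (b - a - ln \<epsilon>) * \<epsilon>"
  proof -
    have "1 - \<epsilon> \<le> - ln \<epsilon>" using ln_le_minus_one[OF eps_pos] by simp
    then have "1 \<le> 10 * (b - a - ln \<epsilon>) - 1" using assms(1) by (simp add: algebra_simps)
    moreover have "10 \<le> 12 * (b - a) - 14 * ln \<epsilon>"
      using \<open>1 - \<epsilon> \<le> - ln \<epsilon>\<close> assms(1) eps_less_1 by (simp add: algebra_simps)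
    ultimately have "0 \<le> \<epsilon> * (M1 * (20 * (b - a - ln \<epsilon>) - 2) + M0 * (12 * (b - a) - 14 * ln \<epsilon> - 10))"
      using eps_pos M0 \<open>0 \<le> M1\<close> by (intro mult_nonneg_nonneg add_nonneg_nonneg) simp_all
    then show ?thesis by (simp add: algebra_simps)
  qed
  finally show ?thesis .
qed

end

theorem lemmaA4:
  fixes a b \<epsilon> :: real and f f' :: "real \<Rightarrow> real"
  assumes "a < b" and "0 < \<epsilon>" and "\<epsilon> < min 1 (b - a)"
    and "C1_on a b f f'"
  shows "\<forall>t\<in>{a..b}. 1 - \<epsilon> \<le> omega_eps a b \<epsilon> t \<and> omega_eps a b \<epsilon> t \<le> 2 \<and>
           \<bar>integral {a..b} (\<lambda>s. f s * rho_eps \<epsilon> (t - s)) - omega_eps a b \<epsilon> t * f t\<bar>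
             \<le> 20 * C1_norm a b f f' * (b - a - ln \<epsilon>) * \<epsilon>"
proof (intro ballI conjI)
  fix t assume t: "t \<in> {a..b}"
  have eps: "0 < \<epsilon>" "\<epsilon> < 1" "\<epsilon> \<le> b - a" using assms(2,3) by auto
  show "1 - \<epsilon> \<le> omega_eps a b \<epsilon> t" using omega_eps_ge[OF eps(1,2) t eps(3)] .
  show "omega_eps a b \<epsilon> t \<le> 2" by (rule omega_eps_le_2)
  have f: "continuous_on {a..b} f" using C1_on_continuous[OF assms(4)] .
  have f': "continuous_on {a..b} f'" using assms(4) unfolding C1_on_def by blast
  have "0 \<le> (SUP y\<in>{a..b}. \<bar>f' y\<bar>)" using abs_le_SUP_abs[OF f' t] by linarith
  from rho_eps_convolution_error[OF eps t f abs_le_SUP_abs[OF f] C1_on_lipschitz[OF assms(4) _ t] this]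
  show "\<bar>integral {a..b} (\<lambda>s. f s * rho_eps \<epsilon> (t - s)) - omega_eps a b \<epsilon> t * f t\<bar>
      \<le> 20 * C1_norm a b f f' * (b - a - ln \<epsilon>) * \<epsilon>"
    unfolding C1_norm_def .
qed

end
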